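(* Let $n\ge 3$ be an odd integer and $k\ge 3$ an integer. Then the metric dimension of $(C_n\square P_k)\square P_2$ is $3$, i.e. the minimum size of a resolving set of $(C_n\square P_k)\square P_2$ is $3$.
   Context: All graphs are finite and connected; $d(u,v)$ is the shortest-path distance. $C_n$ is the cycle on $n$ vertices and $P_k$ the path on $k$ vertices. The cartesian product $G\square H$ has vertex set $V(G)\times V(H)$, with $(g_1,h_1)$ adjacent to $(g_2,h_2)$ iff either $h_1=h_2$ and $g_1g_2\in E(G)$, or $g_1=g_2$ and $h_1h_2\in E(H)$. For an ordered set $Q=\{q_1,\dots,q_l\}$ of vertices, $r(x|Q)=(d(x,q_1),\dots,d(x,q_l))$. $Q$ is a resolving set of $G$ if any two distinct vertices of $G$ have distinct vectors $r(\cdot|Q)$; the metric dimension $\beta(G)$ is the minimum size of a resolving set. *)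

theory Defs
  imports Main
begin

type_synonym 'a graph = "'a set \<times> ('a \<Rightarrow> 'a \<Rightarrow> bool)"

definition verts :: "'a graph \<Rightarrow> 'a set" where "verts G = fst G"
definition adj :: "'a graph \<Rightarrow> 'a \<Rightarrow> 'a \<Rightarrow> bool" where "adj G = snd G"

definition is_walk :: "'a graph \<Rightarrow> 'a list \<Rightarrow> bool" where
  "is_walk G xs \<longleftrightarrow> xs \<noteq> [] \<and> set xs \<subseteq> verts G \<and>
     (\<forall>i. Suc i < length xs \<longrightarrow> adj G (xs ! i) (xs ! Suc i))"

definition dist :: "'a graph \<Rightarrow> 'a \<Rightarrow> 'a \<Rightarrow> nat" where
  "dist G u v = (LEAST n. \<exists>xs. is_walk G xs \<and> hd xs = u \<and> last xs = v \<and> length xs = Suc n)"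

text \<open>Q resolves G: distinct vertices have distinct distance vectors to Q
  (for a set, comparing the distance functions restricted to Q is the same as
   comparing the vectors r(x|Q) for any ordering of Q).\<close>
definition resolving_set :: "'a graph \<Rightarrow> 'a set \<Rightarrow> bool" where
  "resolving_set G Q \<longleftrightarrow> Q \<subseteq> verts G \<and>
     (\<forall>x\<in>verts G. \<forall>y\<in>verts G. x \<noteq> y \<longrightarrow> (\<exists>q\<in>Q. dist G x q \<noteq> dist G y q))"

definition metric_dim :: "'a graph \<Rightarrow> nat" where
  "metric_dim G = (LEAST l. \<exists>Q. finite Q \<and> card Q = l \<and> resolving_set G Q)"

definition cycle_graph :: "nat \<Rightarrow> nat graph" where
  "cycle_graph n = ({0..<n}, \<lambda>i j. i \<noteq> j \<and> (j = Suc i mod n \<or> i = Suc j mod n))"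

definition path_graph :: "nat \<Rightarrow> nat graph" where
  "path_graph k = ({0..<k}, \<lambda>i j. j = Suc i \<or> i = Suc j)"

definition cart_prod :: "'a graph \<Rightarrow> 'b graph \<Rightarrow> ('a \<times> 'b) graph" where
  "cart_prod G H = (verts G \<times> verts H,
     \<lambda>(g1,h1) (g2,h2). (h1 = h2 \<and> adj G g1 g2) \<or> (g1 = g2 \<and> adj H h1 h2))"

end

theory Submission
  imports Defs
begin

text \<open>
  Distances are computed with potentials: a function that vanishes only at the target, grows by
  at most one along every edge and drops by exactly one along some edge from every other vertex
  is the distance to the target. Sums of potentials of the factors are potentials of a cartesian
  product, so in \<open>C\<^sub>n \<box> P\<^sub>k \<box> P\<^sub>2\<close> the distance is the sum of
  the cyclic distance and the two path distances.

  Lower bound: if \<open>{a, b}\<close> resolves a connected graph, all neighbours of \<open>a\<close> are at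
  distance 1 from \<open>a\<close> and their distances to \<open>b\<close> take at most three values, so
  \<open>a\<close> has at most three neighbours; here every vertex has at least four.

  Upper bound: for \<open>n = 2m + 1\<close> the landmarks \<open>(0,0,0)\<close> and \<open>(m,0,0)\<close>
  determine the cycle coordinate \<open>i\<close> and the sum \<open>j + t\<close> of the other two,
  because \<open>d(i,0) - d(i,m)\<close> is \<open>2i - m\<close> for \<open>i \<le> m\<close> and
  \<open>3m + 1 - 2i\<close> otherwise, and these have different parities. The landmark
  \<open>(0,0,1)\<close> then separates \<open>j\<close> from \<open>t\<close>.
\<close>

section \<open>Distances via potentials\<close>

definition connected_graph :: "'a graph \<Rightarrow> bool" where
  "connected_graph G \<longleftrightarrow>
     (\<forall>u\<in>verts G. \<forall>v\<in>verts G. \<exists>xs. is_walk G xs \<and> hd xs = u \<and> last xs = v)"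

definition neighbours :: "'a graph \<Rightarrow> 'a \<Rightarrow> 'a set" where
  "neighbours G a = {x \<in> verts G. adj G a x \<and> x \<noteq> a}"

definition distance_potential :: "'a graph \<Rightarrow> 'a \<Rightarrow> ('a \<Rightarrow> nat) \<Rightarrow> bool" where
  "distance_potential G v D \<longleftrightarrow>
     (\<forall>x\<in>verts G. \<forall>y\<in>verts G. adj G x y \<longrightarrow> D x \<le> D y + 1) \<and>
     (\<forall>x\<in>verts G. 0 < D x \<longrightarrow> (\<exists>y\<in>verts G. adj G x y \<and> D x = D y + 1)) \<and>
     (\<forall>x\<in>verts G. D x = 0 \<longleftrightarrow> x = v)"

lemma is_walk_singleton [simp]: "is_walk G [x] \<longleftrightarrow> x \<in> verts G"
  by (simp add: is_walk_def)

lemma is_walk_Cons: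
  assumes "ys \<noteq> []"
  shows "is_walk G (x # ys) \<longleftrightarrow> x \<in> verts G \<and> adj G x (hd ys) \<and> is_walk G ys"
  using assms unfolding is_walk_def
  by (cases ys) (auto simp: nth_Cons split: nat.splits)

lemma dist_le_walk:
  assumes "is_walk G xs" "hd xs = u" "last xs = v"
  shows "dist G u v \<le> length xs - 1"
proof -
  have "length xs = Suc (length xs - 1)"
    using assms(1) by (cases xs) (auto simp: is_walk_def)
  then show ?thesis
    unfolding dist_def using assms by (intro Least_le) blast
qed

lemma shortest_walk:
  assumes "is_walk G ws" "hd ws = u" "last ws = v"
  obtains xs where "is_walk G xs" "hd xs = u" "last xs = v" "length xs = Suc (dist G u v)"
proof -
  have "length ws = Suc (length ws - 1)"
    using assms(1) by (cases ws) (auto simp: is_walk_def)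
  then have "\<exists>n xs. is_walk G xs \<and> hd xs = u \<and> last xs = v \<and> length xs = Suc n"
    using assms by blast
  from LeastI_ex[OF this] show ?thesis
    using that unfolding dist_def by blast
qed

lemma dist_adj_le:
  assumes "connected_graph G" "x \<in> verts G" "y \<in> verts G" "v \<in> verts G" "adj G x y"
  shows "dist G x v \<le> dist G y v + 1"
proof -
  obtain ws where "is_walk G ws" "hd ws = y" "last ws = v"
    using assms unfolding connected_graph_def by blast
  then obtain ys where ys: "is_walk G ys" "hd ys = y" "last ys = v" "length ys = Suc (dist G y v)"
    by (rule shortest_walk)
  then have "ys \<noteq> []" by auto
  then have "is_walk G (x # ys)"
    using ys assms by (simp add: is_walk_Cons)
  then show ?thesis
    using dist_le_walk[of G "x # ys" x v] ys \<open>ys \<noteq> []\<close> by simp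
qed

lemma dist_adj_eq_1:
  assumes "x \<in> verts G" "y \<in> verts G" "adj G x y" "x \<noteq> y"
  shows "dist G x y = 1"
proof -
  have walk: "is_walk G [x, y]"
    using assms by (simp add: is_walk_Cons)
  then obtain xs where xs: "is_walk G xs" "hd xs = x" "last xs = y" "length xs = Suc (dist G x y)"
    by (rule shortest_walk) simp_all
  have "dist G x y \<noteq> 0"
  proof
    assume "dist G x y = 0"
    then obtain z where "xs = [z]" using xs(4) by (cases xs) auto
    then show False using xs assms(4) by simp
  qed
  moreover have "dist G x y \<le> 1"
    using dist_le_walk[OF walk] by simp
  ultimately show ?thesis by simp
qed

lemma potential_walk:
  assumes "distance_potential G v D" "x \<in> verts G"
  shows "\<exists>xs. is_walk G xs \<and> hd xs = x \<and> last xs = v \<and> length xs = Suc (D x)"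
  using assms(2)
proof (induction "D x" arbitrary: x)
  case 0
  then have "x = v" using assms(1) by (simp add: distance_potential_def)
  then show ?case using 0 by (intro exI[of _ "[x]"]) simp
next
  case (Suc m)
  then obtain y where y: "y \<in> verts G" "adj G x y" "D x = D y + 1"
    using assms(1) unfolding distance_potential_def by (metis zero_less_Suc)
  with Suc obtain ys where ys: "is_walk G ys" "hd ys = y" "last ys = v" "length ys = Suc (D y)"
    by auto
  then have "ys \<noteq> []" by auto
  then show ?case
    using ys y Suc.prems by (intro exI[of _ "x # ys"]) (simp add: is_walk_Cons)
qed

lemma potential_less_length_walk:
  assumes "distance_potential G v D" "is_walk G xs" "last xs = v"
  shows "D (hd xs) < length xs"
  using assms(2,3)
proof (induction xs rule: induct_list012)
  case 1 then show ?case by (simp add: is_walk_def)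
next
  case (2 x)
  then show ?case using assms(1) by (simp add: distance_potential_def)
next
  case (3 x y ys)
  then have "x \<in> verts G" "adj G x y" "is_walk G (y # ys)"
    by (simp_all add: is_walk_Cons)
  moreover from this have "y \<in> verts G" "D y < length (y # ys)"
    using 3 by (auto simp: is_walk_def)
  ultimately show ?case using assms(1) unfolding distance_potential_def by fastforce
qed

lemma dist_eq_potential:
  assumes "distance_potential G v D" "u \<in> verts G"
  shows "dist G u v = D u"
  unfolding dist_def
proof (rule Least_equality)
  show "\<exists>xs. is_walk G xs \<and> hd xs = u \<and> last xs = v \<and> length xs = Suc (D u)"
    using potential_walk[OF assms] .
next
  fix m assume "\<exists>xs. is_walk G xs \<and> hd xs = u \<and> last xs = v \<and> length xs = Suc m"
  then show "D u \<le> m"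
    using potential_less_length_walk[OF assms(1)] by fastforce
qed

lemma connected_graphI_potential:
  assumes "\<And>v. v \<in> verts G \<Longrightarrow> \<exists>D. distance_potential G v D"
  shows "connected_graph G"
  unfolding connected_graph_def using assms potential_walk by metis

section \<open>Resolving sets and vertex degrees\<close>

lemma resolving_set_mono:
  assumes "resolving_set G Q" "Q \<subseteq> Q'" "Q' \<subseteq> verts G"
  shows "resolving_set G Q'"
  using assms unfolding resolving_set_def by blast

lemma card_neighbours_le_3_if_resolving_pair:
  assumes "connected_graph G" "symp (adj G)" "resolving_set G {a, b}"
  shows "card (neighbours G a) \<le> 3"
proof -
  have ab: "a \<in> verts G" "b \<in> verts G"
    using assms(3) by (auto simp: resolving_set_def)
  let ?d = "dist G a b"
  have near: "dist G x b \<in> {?d - 1, ?d, ?d + 1}" if "x \<in> neighbours G a" for x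
  proof -
    have "x \<in> verts G" "adj G a x" "adj G x a"
      using that assms(2) by (auto simp: neighbours_def symp_def)
    then have "dist G x b \<le> ?d + 1" "?d \<le> dist G x b + 1"
      using dist_adj_le[OF assms(1)] ab by blast+
    then show ?thesis by auto
  qed
  have "inj_on (\<lambda>x. dist G x b) (neighbours G a)"
  proof (rule inj_onI)
    fix x y
    assume x: "x \<in> neighbours G a" and y: "y \<in> neighbours G a"
      and eq: "dist G x b = dist G y b"
    have "dist G x a = 1" "dist G y a = 1"
      using x y ab assms(2) dist_adj_eq_1[of _ G a] by (auto simp: neighbours_def symp_def)
    with eq x y assms(3) show "x = y"
      unfolding resolving_set_def neighbours_def by force
  qed
  then have "card (neighbours G a) \<le> card {?d - 1, ?d, ?d + 1}"
    using near by (intro card_inj_on_le) auto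
  also have "\<dots> \<le> 3"
    by (simp add: card_insert_if)
  finally show ?thesis .
qed

lemma subset_doubleton_if_card_le_2:
  assumes "finite Q" "card Q \<le> 2" "Q \<subseteq> V" "v \<in> V"
  obtains a b where "a \<in> V" "b \<in> V" "Q \<subseteq> {a, b}"
proof -
  consider "card Q = 0" | "card Q = 1" | "card Q = 2"
    using assms(2) by linarith
  then show ?thesis
  proof cases
    case 1 then show ?thesis using assms that by simp
  next
    case 2 then show ?thesis using assms that by (auto simp: card_1_singleton_iff)
  next
    case 3 then show ?thesis using assms that by (auto simp: card_2_iff)
  qed
qed

lemma three_le_card_resolving_set:
  assumes "connected_graph G" "symp (adj G)" "v \<in> verts G"
    and four_neighbours: "\<And>a. a \<in> verts G \<Longrightarrow> 4 \<le> card (neighbours G a)"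
    and "finite Q" "resolving_set G Q"
  shows "3 \<le> card Q"
proof (rule ccontr)
  assume "\<not> 3 \<le> card Q"
  then have "card Q \<le> 2" by simp
  moreover have "Q \<subseteq> verts G"
    using assms(6) by (simp add: resolving_set_def)
  ultimately obtain a b where ab: "a \<in> verts G" "b \<in> verts G" "Q \<subseteq> {a, b}"
    using subset_doubleton_if_card_le_2 assms(3,5) by metis
  then have "resolving_set G {a, b}"
    using resolving_set_mono assms(6) by blast
  then have "card (neighbours G a) \<le> 3"
    by (rule card_neighbours_le_3_if_resolving_pair[OF assms(1,2)])
  with four_neighbours[OF ab(1)] show False by simp
qed

lemma metric_dim_eqI:
  assumes "finite Q" "resolving_set G Q"
    and "\<And>P. finite P \<Longrightarrow> resolving_set G P \<Longrightarrow> card Q \<le> card P"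
  shows "metric_dim G = card Q"
  unfolding metric_dim_def using assms by (intro Least_equality) auto

section \<open>Cartesian products, cycles and paths\<close>

lemma verts_cart_prod [simp]: "verts (cart_prod G H) = verts G \<times> verts H"
  by (simp add: cart_prod_def verts_def)

lemma adj_cart_prod [simp]:
  "adj (cart_prod G H) (x, y) (x', y') \<longleftrightarrow> (y = y' \<and> adj G x x') \<or> (x = x' \<and> adj H y y')"
  by (simp add: cart_prod_def adj_def)

lemma verts_cycle_graph [simp]: "verts (cycle_graph n) = {0..<n}"
  by (simp add: cycle_graph_def verts_def)

lemma adj_cycle_graph [simp]:
  "adj (cycle_graph n) i j \<longleftrightarrow> i \<noteq> j \<and> (j = Suc i mod n \<or> i = Suc j mod n)"
  by (simp add: cycle_graph_def adj_def)

lemma verts_path_graph [simp]: "verts (path_graph k) = {0..<k}"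
  by (simp add: path_graph_def verts_def)

lemma adj_path_graph [simp]: "adj (path_graph k) i j \<longleftrightarrow> j = Suc i \<or> i = Suc j"
  by (simp add: path_graph_def adj_def)

lemma symp_adj_cart_prod:
  assumes "symp (adj G)" "symp (adj H)"
  shows "symp (adj (cart_prod G H))"
  using assms unfolding symp_def by auto

lemma neighbours_cart_prod:
  assumes "x \<in> verts G" "y \<in> verts H"
  shows "neighbours (cart_prod G H) (x, y) =
    (\<lambda>x'. (x', y)) ` neighbours G x \<union> Pair x ` neighbours H y"
  using assms by (auto simp: neighbours_def)

lemma card_neighbours_cart_prod:
  assumes "finite (verts G)" "finite (verts H)" "x \<in> verts G" "y \<in> verts H"
  shows "card (neighbours (cart_prod G H) (x, y)) = card (neighbours G x) + card (neighbours H y)"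
proof -
  have "finite (neighbours G x)" "finite (neighbours H y)"
    using assms(1,2) by (simp_all add: neighbours_def)
  moreover have "(\<lambda>x'. (x', y)) ` neighbours G x \<inter> Pair x ` neighbours H y = {}"
    by (auto simp: neighbours_def)
  ultimately show ?thesis
    using assms(3,4) by (simp add: neighbours_cart_prod card_Un_disjoint card_image inj_on_def)
qed

lemma distance_potential_cart_prod:
  assumes G: "distance_potential G g DG" and H: "distance_potential H h DH"
  shows "distance_potential (cart_prod G H) (g, h) (\<lambda>(x, y). DG x + DH y)"
  unfolding distance_potential_def
proof (intro conjI ballI impI)
  fix p q assume "p \<in> verts (cart_prod G H)" "q \<in> verts (cart_prod G H)" "adj (cart_prod G H) p q"
  then show "(case p of (x, y) \<Rightarrow> DG x + DH y) \<le> (case q of (x, y) \<Rightarrow> DG x + DH y) + 1"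
    using G H by (cases p; cases q) (auto simp: distance_potential_def)
next
  fix p assume p: "p \<in> verts (cart_prod G H)" and pos: "0 < (case p of (x, y) \<Rightarrow> DG x + DH y)"
  obtain x y where xy: "p = (x, y)" "x \<in> verts G" "y \<in> verts H"
    using p by auto
  show "\<exists>q\<in>verts (cart_prod G H). adj (cart_prod G H) p q \<and>
    (case p of (x, y) \<Rightarrow> DG x + DH y) = (case q of (x, y) \<Rightarrow> DG x + DH y) + 1"
  proof (cases "0 < DG x")
    case True
    then obtain x' where "x' \<in> verts G" "adj G x x'" "DG x = DG x' + 1"
      using G xy unfolding distance_potential_def by blast
    then show ?thesis using xy by (intro bexI[of _ "(x', y)"]) auto
  next
    case False
    then obtain y' where "y' \<in> verts H" "adj H y y'" "DH y = DH y' + 1"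
      using H xy pos unfolding distance_potential_def by auto
    then show ?thesis using xy False by (intro bexI[of _ "(x, y')"]) auto
  qed
next
  fix p assume "p \<in> verts (cart_prod G H)"
  then show "(case p of (x, y) \<Rightarrow> DG x + DH y) = 0 \<longleftrightarrow> p = (g, h)"
    using G H by (cases p) (auto simp: distance_potential_def)
qed

definition absdiff :: "nat \<Rightarrow> nat \<Rightarrow> nat" where
  "absdiff x y = (x - y) + (y - x)"

definition cycle_dist :: "nat \<Rightarrow> nat \<Rightarrow> nat \<Rightarrow> nat" where
  "cycle_dist n i a = min (absdiff i a) (n - absdiff i a)"

lemma distance_potential_path_graph:
  assumes "b < k"
  shows "distance_potential (path_graph k) b (\<lambda>j. absdiff j b)"
  unfolding distance_potential_def
proof (intro conjI ballI impI)
  fix j assume "j \<in> verts (path_graph k)" "0 < absdiff j b"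
  then show "\<exists>j'\<in>verts (path_graph k). adj (path_graph k) j j' \<and> absdiff j b = absdiff j' b + 1"
    using assms by (intro bexI[of _ "if j < b then Suc j else j - 1"]) (auto simp: absdiff_def)
qed (auto simp: absdiff_def)

lemma min_compl_le:
  fixes d d' n :: nat
  assumes "d \<le> n" "d \<le> d' + 1" "d' \<le> d + 1"
  shows "min d (n - d) \<le> min d' (n - d') + 1"
  using assms by (cases "d' \<le> n - d'") (simp_all add: min_def, linarith)

lemma Suc_mod_eq: "i < n \<Longrightarrow> Suc i mod n = (if Suc i = n then 0 else Suc i)"
  by auto

lemma cycle_dist_Suc_mod:
  assumes "i < n" "a < n"
  shows "cycle_dist n i a \<le> cycle_dist n (Suc i mod n) a + 1 \<and>
    cycle_dist n (Suc i mod n) a \<le> cycle_dist n i a + 1"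
proof (cases "Suc i = n")
  case True
  then have "cycle_dist n i a = min (a + 1) (n - (a + 1))"
    "cycle_dist n (Suc i mod n) a = min a (n - a)"
    using assms by (auto simp: cycle_dist_def absdiff_def min.commute)
  then show ?thesis
    using assms min_compl_le[of a n "a + 1"] min_compl_le[of "a + 1" n a] by simp
next
  case False
  then have "Suc i mod n = Suc i" "absdiff i a \<le> n" "absdiff (Suc i) a \<le> n"
    "absdiff i a \<le> absdiff (Suc i) a + 1" "absdiff (Suc i) a \<le> absdiff i a + 1"
    using assms by (auto simp: absdiff_def)
  then show ?thesis
    unfolding cycle_dist_def using min_compl_le by metis
qed

lemma cycle_dist_descent:
  assumes "i < n" "a < n" "i \<noteq> a"
  obtains i' where "i' < n" "i' = Suc i mod n \<or> i = Suc i' mod n"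
    "cycle_dist n i a = cycle_dist n i' a + 1"
proof -
  consider "i < a" "2 * (a - i) \<le> n" | "i < a" "n < 2 * (a - i)"
    | "a < i" "2 * (i - a) \<le> n" | "a < i" "n < 2 * (i - a)"
    using assms(3) by linarith
  then show ?thesis
  proof cases
    case 1
    then show ?thesis using assms
      by (intro that[of "Suc i"]) (auto simp: cycle_dist_def absdiff_def min_def)
  next
    case 2
    then show ?thesis using assms
      by (intro that[of "if i = 0 then n - 1 else i - 1"])
        (auto simp: cycle_dist_def absdiff_def min_def)
  next
    case 3
    then show ?thesis using assms
      by (intro that[of "i - 1"]) (auto simp: cycle_dist_def absdiff_def min_def)
  next
    case 4
    then show ?thesis using assms
      by (intro that[of "Suc i mod n"]) (auto simp: cycle_dist_def absdiff_def min_def Suc_mod_eq)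
  qed
qed

lemma distance_potential_cycle_graph:
  assumes "a < n"
  shows "distance_potential (cycle_graph n) a (\<lambda>i. cycle_dist n i a)"
  unfolding distance_potential_def
proof (intro conjI ballI impI)
  fix i i' assume "i \<in> verts (cycle_graph n)" "i' \<in> verts (cycle_graph n)" "adj (cycle_graph n) i i'"
  then show "cycle_dist n i a \<le> cycle_dist n i' a + 1"
    using cycle_dist_Suc_mod assms by auto
next
  fix i assume i: "i \<in> verts (cycle_graph n)" and pos: "0 < cycle_dist n i a"
  then have "i < n" "i \<noteq> a"
    by (auto simp: cycle_dist_def absdiff_def)
  then obtain i' where i': "i' < n" "i' = Suc i mod n \<or> i = Suc i' mod n"
    "cycle_dist n i a = cycle_dist n i' a + 1"
    using assms cycle_dist_descent by blast
  moreover have "i \<noteq> i'"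
    using i'(3) by auto
  ultimately show "\<exists>i'\<in>verts (cycle_graph n). adj (cycle_graph n) i i' \<and>
    cycle_dist n i a = cycle_dist n i' a + 1"
    by auto
next
  fix i assume "i \<in> verts (cycle_graph n)"
  then show "cycle_dist n i a = 0 \<longleftrightarrow> i = a"
    using assms by (auto simp: cycle_dist_def absdiff_def)
qed

lemma two_le_card_neighbours_cycle_graph:
  assumes "3 \<le> n" "i < n"
  shows "2 \<le> card (neighbours (cycle_graph n) i)"
proof -
  let ?succ = "if Suc i = n then 0 else Suc i" and ?pred = "if i = 0 then n - 1 else i - 1"
  have "{?succ, ?pred} \<subseteq> neighbours (cycle_graph n) i"
    using assms by (auto simp: neighbours_def Suc_mod_eq)
  moreover have "?succ \<noteq> ?pred"
    using assms by auto
  ultimately show ?thesis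
    using card_mono[of "neighbours (cycle_graph n) i" "{?succ, ?pred}"]
    by (simp add: neighbours_def)
qed

lemma card_neighbours_path_graph_pos:
  assumes "2 \<le> k" "j < k"
  shows "0 < card (neighbours (path_graph k) j)"
proof -
  have "(if j = 0 then 1 else j - 1) \<in> neighbours (path_graph k) j"
    using assms by (auto simp: neighbours_def)
  then show ?thesis
    by (auto simp: card_gt_0_iff neighbours_def)
qed

section \<open>The stacked cylinder\<close>

abbreviation stacked_cylinder :: "nat \<Rightarrow> nat \<Rightarrow> nat \<Rightarrow> ((nat \<times> nat) \<times> nat) graph" where
  "stacked_cylinder n k l \<equiv> cart_prod (cart_prod (cycle_graph n) (path_graph k)) (path_graph l)"

lemma distance_potential_stacked_cylinder:
  assumes "a < n" "b < k" "s < l"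
  shows "distance_potential (stacked_cylinder n k l) ((a, b), s)
    (\<lambda>((i, j), t). cycle_dist n i a + absdiff j b + absdiff t s)"
proof -
  have "distance_potential (stacked_cylinder n k l) ((a, b), s)
    (\<lambda>(x, t). (\<lambda>(i, j). cycle_dist n i a + absdiff j b) x + absdiff t s)"
    using assms by (intro distance_potential_cart_prod distance_potential_cycle_graph
        distance_potential_path_graph)
  then show ?thesis
    by (simp add: case_prod_unfold)
qed

lemma dist_stacked_cylinder:
  assumes "((i, j), t) \<in> verts (stacked_cylinder n k l)" "((a, b), s) \<in> verts (stacked_cylinder n k l)"
  shows "dist (stacked_cylinder n k l) ((i, j), t) ((a, b), s) =
    cycle_dist n i a + absdiff j b + absdiff t s"
  using dist_eq_potential[OF distance_potential_stacked_cylinder assms(1)] assms(2) by simp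

lemma connected_stacked_cylinder: "connected_graph (stacked_cylinder n k l)"
  by (rule connected_graphI_potential) (force intro: distance_potential_stacked_cylinder)

lemma symp_adj_stacked_cylinder: "symp (adj (stacked_cylinder n k l))"
  by (intro symp_adj_cart_prod) (auto simp: symp_def)

lemma card_neighbours_stacked_cylinder:
  assumes "3 \<le> n" "2 \<le> k" "2 \<le> l" "v \<in> verts (stacked_cylinder n k l)"
  shows "4 \<le> card (neighbours (stacked_cylinder n k l) v)"
proof -
  obtain i j t where v: "v = ((i, j), t)" "i < n" "j < k" "t < l"
    using assms(4) by auto
  then have "card (neighbours (stacked_cylinder n k l) v) =
    card (neighbours (cycle_graph n) i) + card (neighbours (path_graph k) j)
      + card (neighbours (path_graph l) t)"
    by (simp add: card_neighbours_cart_prod)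
  moreover have "2 \<le> card (neighbours (cycle_graph n) i)"
    "0 < card (neighbours (path_graph k) j)" "0 < card (neighbours (path_graph l) t)"
    using v assms two_le_card_neighbours_cycle_graph card_neighbours_path_graph_pos by simp_all
  ultimately show ?thesis
    by linarith
qed

lemma odd_cycle_dist_pair_inj:
  assumes n: "n = 2 * m + 1" and "i < n" "i' < n"
    and d0: "cycle_dist n i 0 + c = cycle_dist n i' 0 + c'"
    and dm: "cycle_dist n i m + c = cycle_dist n i' m + c'"
  shows "i = i' \<and> c = c'"
proof -
  have low: "cycle_dist n x 0 = x \<and> cycle_dist n x m + x = m" if "x \<le> m" for x
    using that n by (auto simp: cycle_dist_def absdiff_def)
  have high: "cycle_dist n x 0 + x = n \<and> cycle_dist n x m + m = x" if "m < x" "x < n" for x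
    using that n by (auto simp: cycle_dist_def absdiff_def)
  consider "i \<le> m" "i' \<le> m" | "m < i" "m < i'" | "i \<le> m" "m < i'" | "m < i" "i' \<le> m"
    by linarith
  then show ?thesis
  proof cases
    case 1
    then show ?thesis using low[of i] low[of i'] d0 dm by (intro conjI antisym) linarith+
  next
    case 2
    then show ?thesis using high[of i] high[of i'] assms(2,3) d0 dm by (intro conjI antisym) linarith+
  next
    case 3
    then have "2 * i + 2 * i' = 4 * m + 1"
      using low[of i] high[of i'] assms(3) n d0 dm by (intro antisym) linarith+
    then show ?thesis by presburger
  next
    case 4
    then have "2 * i + 2 * i' = 4 * m + 1"
      using high[of i] low[of i'] assms(2) n d0 dm by (intro antisym) linarith+
    then show ?thesis by presburger
  qed
qed

lemma resolving_set_stacked_cylinder: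
  assumes n: "n = 2 * m + 1" and "1 \<le> k"
  shows "resolving_set (stacked_cylinder n k 2) {((0, 0), 0), ((0, 0), 1), ((m, 0), 0)}"
  unfolding resolving_set_def
proof (intro conjI ballI impI)
  let ?G = "stacked_cylinder n k 2"
  show "{((0, 0), 0), ((0, 0), 1), ((m, 0), 0)} \<subseteq> verts ?G"
    using assms by auto
  fix x y assume "x \<in> verts ?G" "y \<in> verts ?G" "x \<noteq> y"
  moreover obtain i j t i' j' t' where "x = ((i, j), t)" "y = ((i', j'), t')"
    using prod.exhaust by metis
  ultimately have xy: "x = ((i, j), t)" "y = ((i', j'), t')"
    "i < n" "i' < n" "j < k" "j' < k" "t < 2" "t' < 2"
    by auto
  show "\<exists>q\<in>{((0, 0), 0), ((0, 0), 1), ((m, 0), 0)}. dist ?G x q \<noteq> dist ?G y q"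
  proof (rule ccontr)
    assume "\<not> ?thesis"
    then have "cycle_dist n i 0 + (j + t) = cycle_dist n i' 0 + (j' + t')"
      "cycle_dist n i m + (j + t) = cycle_dist n i' m + (j' + t')"
      and layer: "cycle_dist n i 0 + j + absdiff t 1 = cycle_dist n i' 0 + j' + absdiff t' 1"
      using xy assms by (auto simp: dist_stacked_cylinder absdiff_def)
    then have "i = i'" "j + t = j' + t'"
      using odd_cycle_dist_pair_inj[OF n xy(3,4)] by auto
    moreover have "absdiff t 1 = 1 - t" "absdiff t' 1 = 1 - t'"
      using xy(7,8) by (auto simp: absdiff_def)
    ultimately show False
      using xy layer \<open>x \<noteq> y\<close> by auto
  qed
qed

theorem theorem3p2:
  fixes n k :: nat
  assumes "odd n" and "n \<ge> 3" and "k \<ge> 3"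
  shows "metric_dim (cart_prod (cart_prod (cycle_graph n) (path_graph k)) (path_graph 2)) = 3"
proof -
  obtain m where n: "n = 2 * m + 1"
    using \<open>odd n\<close> oddE by blast
  let ?Q = "{((0, 0), 0), ((0, 0), 1), ((m, 0), 0)} :: ((nat \<times> nat) \<times> nat) set"
  have "card ?Q = 3"
    using n \<open>n \<ge> 3\<close> by auto
  moreover have "resolving_set (stacked_cylinder n k 2) ?Q"
    using n \<open>k \<ge> 3\<close> by (intro resolving_set_stacked_cylinder) auto
  moreover have "3 \<le> card P" if "finite P" "resolving_set (stacked_cylinder n k 2) P" for P
  proof (rule three_le_card_resolving_set[OF connected_stacked_cylinder symp_adj_stacked_cylinder])
    show "((0, 0), 0) \<in> verts (stacked_cylinder n k 2)"
      using assms by auto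
  qed (use that assms card_neighbours_stacked_cylinder in auto)
  ultimately show ?thesis
    using metric_dim_eqI[of ?Q "stacked_cylinder n k 2"] by simp
qed

end
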